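(* Consider the following TOPSIS procedure. Given $n$ alternatives $A_1,\dots,A_n$, $m$ attributes $\mathscr{O}_1,\dots,\mathscr{O}_m$ each classified as benefit or cost, an intuitionistic fuzzy decision matrix $R=(r_{ij})_{n\times m}$ with $r_{ij}=\langle\mu_{ij},\nu_{ij}\rangle\in\tilde{\mathbb{I}}$, real weights $\omega_1,\dots,\omega_m$ with $\omega_j\in(0,1]$ and $\sum_j\omega_j=1$, and a parameter $\lambda\ge1$: (i) normalize: $\bar r_{ij}=\langle\bar\mu_{ij},\bar\nu_{ij}\rangle=r_{ij}$ if $\mathscr{O}_j$ is a benefit attribute and $\bar r_{ij}=\langle\nu_{ij},\mu_{ij}\rangle$ if $\mathscr{O}_j$ is a cost attribute; (ii) ideal points: $\langle\mu_j^+,\nu_j^+\rangle=\langle\max_i\bar\mu_{ij},\min_i\bar\nu_{ij}\rangle$ and $\langle\mu_j^-,\nu_j^-\rangle=\langle\min_i\bar\mu_{ij},\max_i\bar\nu_{ij}\rangle$; (iii) $\mathbf{S}(A_i,\mathbf{A}^+)=1-\sum_{j=1}^m\omega_j\,\varrho^{(\lambda)}(\bar r_{ij},\langle\mu_j^+,\nu_j^+\rangle)$ and $\mathbf{S}(A_i,\mathbf{A}^-)=1-\sum_{j=1}^m\omega_j\,\varrho^{(\lambda)}(\bar r_{ij},\langle\mu_j^-,\nu_j^-\rangle)$; (iv) $\mathscr{C}_i=\frac{\mathbf{S}(A_i,\mathbf{A}^+)}{\mathbf{S}(A_i,\mathbf{A}^+)+\mathbf{S}(A_i,\mathbf{A}^-)}$.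 Then this procedure is increasing with the linear order $\le_{XY}$: if $1\le i_1,i_2\le n$ are such that $\bar r_{i_1j}\le_{XY}\bar r_{i_2j}$ for all $1\le j\le m$, then $\mathscr{C}_{i_1}\le\mathscr{C}_{i_2}$. In particular, it is increasing with Atanassov's order: if $\bar r_{i_1j}\subset\bar r_{i_2j}$ for all $j$, then $\mathscr{C}_{i_1}\le\mathscr{C}_{i_2}$.
   Context: $\tilde{\mathbb{I}}=\{\langle\mu,\nu\rangle\in[0,1]^2\mid\mu+\nu\le1\}$ (intuitionistic fuzzy values). For $\alpha=\langle\mu_\alpha,\nu_\alpha\rangle$: $s(\alpha)=\mu_\alpha-\nu_\alpha$, $h(\alpha)=\mu_\alpha+\nu_\alpha$. Order $\le_{XY}$: $\alpha<_{XY}\beta$ if $s(\alpha)<s(\beta)$, or $s(\alpha)=s(\beta)$ and $h(\alpha)<h(\beta)$; $\alpha\le_{XY}\beta$ means $\alpha<_{XY}\beta$ or $\alpha=\beta$. Atanassov's order: $\langle\mu_1,\nu_1\rangle\subset\langle\mu_2,\nu_2\rangle$ iff $\mu_1\le\mu_2$ and $\nu_1\ge\nu_2$. For $\lambda\ge1$, $\varrho^{(\lambda)}(\alpha,\beta)=\frac{1}{1+2\lambda}(1+\lambda|s(\alpha)-s(\beta)|)$ if $s(\alpha)\ne s(\beta)$ and $\varrho^{(\lambda)}(\alpha,\beta)=\frac{1}{1+2\lambda}|h(\alpha)-h(\beta)|$ if $s(\alpha)=s(\beta)$. *)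

theory Defs
  imports Main "HOL.Real"
begin

definition ifv_set :: "(real \<times> real) set" where
  "ifv_set = {(mu, nu). 0 \<le> mu \<and> mu \<le> 1 \<and> 0 \<le> nu \<and> nu \<le> 1 \<and> mu + nu \<le> 1}"

definition score :: "real \<times> real \<Rightarrow> real" where
  "score a = fst a - snd a"

definition accuracy :: "real \<times> real \<Rightarrow> real" where
  "accuracy a = fst a + snd a"

definition xy_less :: "real \<times> real \<Rightarrow> real \<times> real \<Rightarrow> bool" where
  "xy_less a b \<longleftrightarrow> score a < score b \<or> (score a = score b \<and> accuracy a < accuracy b)"

definition xy_le :: "real \<times> real \<Rightarrow> real \<times> real \<Rightarrow> bool" where
  "xy_le a b \<longleftrightarrow> xy_less a b \<or> a = b"

definition atanassov_le :: "real \<times> real \<Rightarrow> real \<times> real \<Rightarrow> bool" where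
  "atanassov_le a b \<longleftrightarrow> fst a \<le> fst b \<and> snd a \<ge> snd b"

definition rho :: "real \<Rightarrow> real \<times> real \<Rightarrow> real \<times> real \<Rightarrow> real" where
  "rho lam a b = (if score a \<noteq> score b
      then (1 + lam * \<bar>score a - score b\<bar>) / (1 + 2 * lam)
      else \<bar>accuracy a - accuracy b\<bar> / (1 + 2 * lam))"

text \<open>TOPSIS procedure. Alternatives are indexed by i < n, attributes by j < m (0-based).
  benefit j holds iff attribute j is a benefit attribute (otherwise cost).\<close>
definition normalize :: "(nat \<Rightarrow> bool) \<Rightarrow> (nat \<Rightarrow> nat \<Rightarrow> real \<times> real) \<Rightarrow> nat \<Rightarrow> nat \<Rightarrow> real \<times> real" where
  "normalize benefit r i j = (if benefit j then r i j else (snd (r i j), fst (r i j)))"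

definition pos_ideal :: "nat \<Rightarrow> (nat \<Rightarrow> bool) \<Rightarrow> (nat \<Rightarrow> nat \<Rightarrow> real \<times> real) \<Rightarrow> nat \<Rightarrow> real \<times> real" where
  "pos_ideal n benefit r j =
     (Max ((\<lambda>i. fst (normalize benefit r i j)) ` {..<n}),
      Min ((\<lambda>i. snd (normalize benefit r i j)) ` {..<n}))"

definition neg_ideal :: "nat \<Rightarrow> (nat \<Rightarrow> bool) \<Rightarrow> (nat \<Rightarrow> nat \<Rightarrow> real \<times> real) \<Rightarrow> nat \<Rightarrow> real \<times> real" where
  "neg_ideal n benefit r j =
     (Min ((\<lambda>i. fst (normalize benefit r i j)) ` {..<n}),
      Max ((\<lambda>i. snd (normalize benefit r i j)) ` {..<n}))"

definition S_pos :: "nat \<Rightarrow> nat \<Rightarrow> (nat \<Rightarrow> bool) \<Rightarrow> (nat \<Rightarrow> nat \<Rightarrow> real \<times> real) \<Rightarrow> (nat \<Rightarrow> real) \<Rightarrow> real \<Rightarrow> nat \<Rightarrow> real" where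
  "S_pos n m benefit r w lam i =
     1 - (\<Sum>j<m. w j * rho lam (normalize benefit r i j) (pos_ideal n benefit r j))"

definition S_neg :: "nat \<Rightarrow> nat \<Rightarrow> (nat \<Rightarrow> bool) \<Rightarrow> (nat \<Rightarrow> nat \<Rightarrow> real \<times> real) \<Rightarrow> (nat \<Rightarrow> real) \<Rightarrow> real \<Rightarrow> nat \<Rightarrow> real" where
  "S_neg n m benefit r w lam i =
     1 - (\<Sum>j<m. w j * rho lam (normalize benefit r i j) (neg_ideal n benefit r j))"

definition closeness :: "nat \<Rightarrow> nat \<Rightarrow> (nat \<Rightarrow> bool) \<Rightarrow> (nat \<Rightarrow> nat \<Rightarrow> real \<times> real) \<Rightarrow> (nat \<Rightarrow> real) \<Rightarrow> real \<Rightarrow> nat \<Rightarrow> real" where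
  "closeness n m benefit r w lam i =
     S_pos n m benefit r w lam i / (S_pos n m benefit r w lam i + S_neg n m benefit r w lam i)"

end

theory Submission
  imports Defs
begin

text \<open>Both orders enter only through the score: each implies that every normalized entry of
  \<open>A\<^sub>i\<^sub>1\<close> has score at most that of the corresponding entry of \<open>A\<^sub>i\<^sub>2\<close>. Every normalized value lies
  below the positive ideal point and above the negative one in Atanassov's order, and for
  \<open>a \<subset> b\<close> the distance \<open>\<rho>(a, b)\<close> is \<open>0\<close> if \<open>a = b\<close> and \<open>(1 + \<lambda> (s(b) - s(a))) / (1 + 2\<lambda>)\<close>
  otherwise. Hence higher scores mean being closer to \<open>A\<^sup>+\<close> and farther from \<open>A\<^sup>-\<close>: the
  similarity to \<open>A\<^sup>+\<close> grows, the one to \<open>A\<^sup>-\<close> shrinks, both stay nonnegative, and so their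
  ratio \<open>C\<^sub>i\<close> grows.\<close>

lemma xy_le_imp_score_le: "xy_le a b \<Longrightarrow> score a \<le> score b"
  by (auto simp: xy_le_def xy_less_def)

lemma atanassov_le_imp_score_le: "atanassov_le a b \<Longrightarrow> score a \<le> score b"
  by (simp add: atanassov_le_def score_def)

lemma atanassov_le_score_eq_iff:
  "atanassov_le a b \<Longrightarrow> score a = score b \<longleftrightarrow> a = b"
  by (auto simp: atanassov_le_def score_def prod_eq_iff)

lemma rho_commute: "rho lam a b = rho lam b a"
  by (simp add: rho_def abs_minus_commute)

lemma rho_self [simp]: "rho lam a a = 0"
  by (simp add: rho_def)

lemma rho_nonneg: "0 \<le> lam \<Longrightarrow> 0 \<le> rho lam a b"
  by (simp add: rho_def)

lemma rho_le_one:
  assumes "a \<in> ifv_set" "b \<in> ifv_set" "0 \<le> lam"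
  shows "rho lam a b \<le> 1"
proof -
  have "\<bar>score a - score b\<bar> \<le> 2" "\<bar>accuracy a - accuracy b\<bar> \<le> 1"
    using assms(1,2) by (auto simp: ifv_set_def score_def accuracy_def)
  then have "lam * \<bar>score a - score b\<bar> \<le> lam * 2"
    and "\<bar>accuracy a - accuracy b\<bar> \<le> 1 + 2 * lam"
    using assms(3) by (auto intro: mult_left_mono)
  then show ?thesis
    using assms(3) by (simp add: rho_def)
qed

lemma rho_atanassov_le:
  assumes "atanassov_le a b"
  shows "rho lam a b = (if a = b then 0 else (1 + lam * (score b - score a)) / (1 + 2 * lam))"
  using atanassov_le_score_eq_iff[OF assms] atanassov_le_imp_score_le[OF assms]
  by (auto simp: rho_def)

lemma rho_to_upper_antimono:
  assumes "atanassov_le x p" "atanassov_le y p" "score x \<le> score y" "0 \<le> lam"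
  shows "rho lam y p \<le> rho lam x p"
proof (cases "y = p")
  case True
  then show ?thesis
    using rho_nonneg[OF assms(4)] by simp
next
  case False
  then have "score y < score p"
    using assms(2) atanassov_le_score_eq_iff atanassov_le_imp_score_le by fastforce
  then have "x \<noteq> p"
    using assms(3) by auto
  moreover have "lam * (score p - score y) \<le> lam * (score p - score x)"
    using assms(3,4) by (intro mult_left_mono) auto
  ultimately show ?thesis
    using False assms(4)
    by (simp add: rho_atanassov_le[OF assms(1)] rho_atanassov_le[OF assms(2)] divide_right_mono)
qed

lemma rho_to_lower_mono:
  assumes "atanassov_le p x" "atanassov_le p y" "score x \<le> score y" "0 \<le> lam"
  shows "rho lam x p \<le> rho lam y p"
proof (cases "x = p")
  case True
  then show ?thesis
    using rho_nonneg[OF assms(4)] by simp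
next
  case False
  then have "score p < score x"
    using assms(1) atanassov_le_score_eq_iff atanassov_le_imp_score_le by fastforce
  then have "y \<noteq> p"
    using assms(3) by auto
  moreover have "lam * (score x - score p) \<le> lam * (score y - score p)"
    using assms(3,4) by (intro mult_left_mono) auto
  ultimately show ?thesis
    using False assms(4)
    by (simp add: rho_commute[of _ _ p] rho_atanassov_le[OF assms(1)] rho_atanassov_le[OF assms(2)]
        divide_right_mono)
qed

lemma Max_Min_in_ifv_set:
  assumes "finite I" "I \<noteq> {}" "\<forall>i\<in>I. f i \<in> ifv_set"
  shows "(Max ((\<lambda>i. fst (f i)) ` I), Min ((\<lambda>i. snd (f i)) ` I)) \<in> ifv_set"
proof -
  obtain k where k: "k \<in> I" "Max ((\<lambda>i. fst (f i)) ` I) = fst (f k)"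
    using Max_in[of "(\<lambda>i. fst (f i)) ` I"] assms(1,2) by fastforce
  obtain l where l: "l \<in> I" "Min ((\<lambda>i. snd (f i)) ` I) = snd (f l)"
    using Min_in[of "(\<lambda>i. snd (f i)) ` I"] assms(1,2) by fastforce
  have "snd (f l) \<le> snd (f k)"
    using l k(1) assms(1) by (metis Min_le finite_imageI image_eqI)
  then show ?thesis
    using k l assms(3) by (auto simp: ifv_set_def)
qed

lemma Min_Max_in_ifv_set:
  assumes "finite I" "I \<noteq> {}" "\<forall>i\<in>I. f i \<in> ifv_set"
  shows "(Min ((\<lambda>i. fst (f i)) ` I), Max ((\<lambda>i. snd (f i)) ` I)) \<in> ifv_set"
proof -
  obtain k where k: "k \<in> I" "Max ((\<lambda>i. snd (f i)) ` I) = snd (f k)"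
    using Max_in[of "(\<lambda>i. snd (f i)) ` I"] assms(1,2) by fastforce
  obtain l where l: "l \<in> I" "Min ((\<lambda>i. fst (f i)) ` I) = fst (f l)"
    using Min_in[of "(\<lambda>i. fst (f i)) ` I"] assms(1,2) by fastforce
  have "fst (f l) \<le> fst (f k)"
    using l k(1) assms(1) by (metis Min_le finite_imageI image_eqI)
  then show ?thesis
    using k l assms(3) by (auto simp: ifv_set_def)
qed

lemma normalize_in_ifv_set: "r i j \<in> ifv_set \<Longrightarrow> normalize benefit r i j \<in> ifv_set"
  by (auto simp: normalize_def ifv_set_def)

lemma pos_ideal_in_ifv_set:
  assumes "\<forall>i<n. r i j \<in> ifv_set" "0 < n"
  shows "pos_ideal n benefit r j \<in> ifv_set"
  unfolding pos_ideal_def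
  by (rule Max_Min_in_ifv_set) (use assms normalize_in_ifv_set in auto)

lemma neg_ideal_in_ifv_set:
  assumes "\<forall>i<n. r i j \<in> ifv_set" "0 < n"
  shows "neg_ideal n benefit r j \<in> ifv_set"
  unfolding neg_ideal_def
  by (rule Min_Max_in_ifv_set) (use assms normalize_in_ifv_set in auto)

lemma normalize_atanassov_le_pos_ideal:
  "i < n \<Longrightarrow> atanassov_le (normalize benefit r i j) (pos_ideal n benefit r j)"
  by (simp add: atanassov_le_def pos_ideal_def)

lemma neg_ideal_atanassov_le_normalize:
  "i < n \<Longrightarrow> atanassov_le (neg_ideal n benefit r j) (normalize benefit r i j)"
  by (simp add: atanassov_le_def neg_ideal_def)

lemma weighted_sum_le_one:
  fixes w d :: "nat \<Rightarrow> real"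
  assumes "\<forall>j<m. 0 \<le> w j" "(\<Sum>j<m. w j) = 1" "\<forall>j<m. d j \<le> 1"
  shows "(\<Sum>j<m. w j * d j) \<le> 1"
proof -
  have "(\<Sum>j<m. w j * d j) \<le> (\<Sum>j<m. w j)"
    using assms(1,3) by (intro sum_mono) (simp add: mult_left_le)
  then show ?thesis
    using assms(2) by simp
qed

lemma S_pos_nonneg:
  assumes "\<forall>i<n. \<forall>j<m. r i j \<in> ifv_set" "\<forall>j<m. 0 \<le> w j" "(\<Sum>j<m. w j) = 1"
    "0 \<le> lam" "i < n"
  shows "0 \<le> S_pos n m benefit r w lam i"
proof -
  have "\<forall>j<m. rho lam (normalize benefit r i j) (pos_ideal n benefit r j) \<le> 1"
    using assms by (auto intro!: rho_le_one normalize_in_ifv_set pos_ideal_in_ifv_set)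
  then show ?thesis
    unfolding S_pos_def using weighted_sum_le_one assms(2,3) by simp
qed

lemma S_neg_nonneg:
  assumes "\<forall>i<n. \<forall>j<m. r i j \<in> ifv_set" "\<forall>j<m. 0 \<le> w j" "(\<Sum>j<m. w j) = 1"
    "0 \<le> lam" "i < n"
  shows "0 \<le> S_neg n m benefit r w lam i"
proof -
  have "\<forall>j<m. rho lam (normalize benefit r i j) (neg_ideal n benefit r j) \<le> 1"
    using assms by (auto intro!: rho_le_one normalize_in_ifv_set neg_ideal_in_ifv_set)
  then show ?thesis
    unfolding S_neg_def using weighted_sum_le_one assms(2,3) by simp
qed

lemma S_pos_mono:
  assumes "\<forall>j<m. score (normalize benefit r i1 j) \<le> score (normalize benefit r i2 j)"
    "\<forall>j<m. 0 \<le> w j" "0 \<le> lam" "i1 < n" "i2 < n"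
  shows "S_pos n m benefit r w lam i1 \<le> S_pos n m benefit r w lam i2"
proof -
  have "(\<Sum>j<m. w j * rho lam (normalize benefit r i2 j) (pos_ideal n benefit r j))
      \<le> (\<Sum>j<m. w j * rho lam (normalize benefit r i1 j) (pos_ideal n benefit r j))"
    using assms by (intro sum_mono mult_left_mono)
      (auto intro: rho_to_upper_antimono normalize_atanassov_le_pos_ideal)
  then show ?thesis
    by (simp add: S_pos_def)
qed

lemma S_neg_antimono:
  assumes "\<forall>j<m. score (normalize benefit r i1 j) \<le> score (normalize benefit r i2 j)"
    "\<forall>j<m. 0 \<le> w j" "0 \<le> lam" "i1 < n" "i2 < n"
  shows "S_neg n m benefit r w lam i2 \<le> S_neg n m benefit r w lam i1"
proof -
  have "(\<Sum>j<m. w j * rho lam (normalize benefit r i1 j) (neg_ideal n benefit r j))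
      \<le> (\<Sum>j<m. w j * rho lam (normalize benefit r i2 j) (neg_ideal n benefit r j))"
    using assms by (intro sum_mono mult_left_mono)
      (auto intro: rho_to_lower_mono neg_ideal_atanassov_le_normalize)
  then show ?thesis
    by (simp add: S_neg_def)
qed

text \<open>The case \<open>a = 0\<close> covers a vanishing denominator, where division yields \<open>0\<close>.\<close>

lemma divide_self_add_mono:
  fixes a b a' b' :: real
  assumes "0 \<le> a" "a \<le> a'" "0 \<le> b'" "b' \<le> b"
  shows "a / (a + b) \<le> a' / (a' + b')"
proof (cases "a = 0")
  case True
  then show ?thesis
    using assms by simp
next
  case False
  then have "0 < a + b" "0 < a' + b'"
    using assms by auto
  moreover have "a * b' \<le> a' * b"
    using assms by (intro mult_mono) auto
  ultimately show ?thesis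
    by (simp add: divide_simps algebra_simps)
qed

lemma closeness_mono_score:
  assumes "\<forall>i<n. \<forall>j<m. r i j \<in> ifv_set" "\<forall>j<m. 0 \<le> w j" "(\<Sum>j<m. w j) = 1"
    "0 \<le> lam" "i1 < n" "i2 < n"
    "\<forall>j<m. score (normalize benefit r i1 j) \<le> score (normalize benefit r i2 j)"
  shows "closeness n m benefit r w lam i1 \<le> closeness n m benefit r w lam i2"
  unfolding closeness_def
  using assms
  by (intro divide_self_add_mono S_pos_nonneg S_pos_mono S_neg_nonneg S_neg_antimono)

theorem theorem6:
  fixes n m :: nat and benefit :: "nat \<Rightarrow> bool" and r :: "nat \<Rightarrow> nat \<Rightarrow> real \<times> real"
    and w :: "nat \<Rightarrow> real" and lam :: real and i1 i2 :: nat
  assumes r_ifv: "\<forall>i<n. \<forall>j<m. r i j \<in> ifv_set"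
    and w_range: "\<forall>j<m. 0 < w j \<and> w j \<le> 1"
    and w_sum: "(\<Sum>j<m. w j) = 1"
    and lam: "1 \<le> lam"
    and i1: "i1 < n" and i2: "i2 < n"
  shows "((\<forall>j<m. xy_le (normalize benefit r i1 j) (normalize benefit r i2 j)) \<longrightarrow>
           closeness n m benefit r w lam i1 \<le> closeness n m benefit r w lam i2) \<and>
         ((\<forall>j<m. atanassov_le (normalize benefit r i1 j) (normalize benefit r i2 j)) \<longrightarrow>
           closeness n m benefit r w lam i1 \<le> closeness n m benefit r w lam i2)"
proof -
  have w_nonneg: "\<forall>j<m. 0 \<le> w j"
    using w_range by (simp add: less_imp_le)
  have lam_nonneg: "0 \<le> lam"
    using lam by simp
  note closeness_mono = closeness_mono_score[OF r_ifv w_nonneg w_sum lam_nonneg i1 i2]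
  show ?thesis
    using closeness_mono xy_le_imp_score_le atanassov_le_imp_score_le by blast
qed

end
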